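(* For $u_1,u_2>0$ let $$M(u_1,u_2)=u_1+u_2-2i\sum_{r,s=1}^{\infty}\frac{(iu_1)^r(iu_2)^s\,(r+s-2)!}{r!\,s!\,(r-1)!\,(s-1)!}.$$ Consider the points $u>0$ such that $(u,u)$ is a stationary point of $M$, i.e. $\frac{\partial M}{\partial u_1}(u,u)=\frac{\partial M}{\partial u_2}(u,u)=0$, and to each such point associate $\tau=M(u,u)/(2i)$. Among all these values, the one of smallest modulus is $\tau_s=M(u_s,u_s)/(2i)$, where $u_s\approx1.202$ is the smallest such point (the smallest positive $u$ with $J_0(2u)=0$, $J_0$ the Bessel function of the first kind). *)

theory Defs
  imports "HOL-Analysis.Analysis"
begin

definition M_term :: "real \<Rightarrow> real \<Rightarrow> nat \<times> nat \<Rightarrow> complex" where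
  "M_term u1 u2 = (\<lambda>(r,s). (\<i> * complex_of_real u1) ^ r * (\<i> * complex_of_real u2) ^ s
       * of_nat (fact (r + s - 2))
       / (of_nat (fact r) * of_nat (fact s) * of_nat (fact (r - 1)) * of_nat (fact (s - 1))))"

definition M :: "real \<Rightarrow> real \<Rightarrow> complex" where
  "M u1 u2 = complex_of_real u1 + complex_of_real u2
     - 2 * \<i> * infsum (M_term u1 u2) ({1..} \<times> {1..})"

definition BesselJ0 :: "real \<Rightarrow> real" where
  "BesselJ0 x = (\<Sum>k. (-1) ^ k * (x / 2) ^ (2 * k) / (fact k) ^ 2)"

definition stationary_diag :: "real \<Rightarrow> bool" where
  "stationary_diag u \<longleftrightarrow> u > 0 \<and>
     ((\<lambda>t. M t u) has_vector_derivative 0) (at u) \<and>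
     ((\<lambda>t. M u t) has_vector_derivative 0) (at u)"

end

(*
  With x = i u, the double series in M is a power series in x1 = i u1 and x2 = i u2.  On the
  diagonal its antidiagonal sums collapse by Vandermonde's identity: the partial derivative of M in
  its first argument at (u, u) is P(x) = sum_n C(2n, n) x^n / n!, and M(u, u) = -2i K(x) with K' = P.
  Since C(2n, n) is the middle coefficient of (1 + 2x + x^2)^n, P(x) = e^(2x) Q(x) with
  Q(x) = sum_k x^(2k) / (k!)^2, and Q(i u) = J0(2u).  By the symmetry of M, the diagonal stationary
  points are therefore exactly the positive zeros of J0(2u).

  The identity K = x e^(2x) (Q - Q'/2) gives M(u, u) = 2u e^(2iu) (J0(2u) - i J1(2u)), hence
  d/du |M(u, u)|^2 = 8u J0(2u)^2 >= 0: |tau| grows along the diagonal, so the smallest stationary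
  point has the smallest |tau|.  Finally J0(2u) decreases on (0, sqrt 2) because J1(2u) > 0 there,
  and alternating-series bounds place its first zero between 1.201 and 1.203.
*)
theory Submission
  imports Defs "HOL-Computational_Algebra.Polynomial"
begin

section \<open>Summation and differentiation\<close>

lemma summable_power_over_fact: "summable (\<lambda>n. (x::real) ^ n / fact n)"
  using summable_exp[of x] by (simp add: divide_inverse mult.commute)

lemma summable_on_exp_dominated:
  fixes h :: "nat \<times> nat \<Rightarrow> 'a::banach"
  assumes bound: "\<And>a b. norm (h (a, b)) \<le> C * (A ^ a / fact a) * (B ^ b / fact b)"
    and "A \<ge> 0" "B \<ge> 0"
  shows "h summable_on UNIV"
proof -
  have "C \<ge> 0"
    using order_trans[OF norm_ge_zero bound[of 0 0]] by simp
  define g where "g = (\<lambda>(a, b). C * (A ^ a / fact a) * (B ^ b / fact b))"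
  have rows: "((\<lambda>b. g (a, b)) has_sum C * (A ^ a / fact a) * exp B) UNIV" for a
  proof -
    have "(\<lambda>b. B ^ b / fact b) sums exp B"
      using exp_converges[of B] by (simp add: divide_inverse mult.commute)
    then have "((\<lambda>b. B ^ b / fact b) has_sum exp B) UNIV"
      by (rule sums_nonneg_imp_has_sum) (use \<open>B \<ge> 0\<close> in simp)
    then show ?thesis
      unfolding g_def prod.case by (rule has_sum_cmult_right)
  qed
  have "(\<lambda>a. C * (A ^ a / fact a) * exp B) summable_on UNIV"
    using summable_power_over_fact[of A] \<open>A \<ge> 0\<close> \<open>C \<ge> 0\<close>
    by (intro summable_nonneg_imp_summable_on summable_mult2 summable_mult) auto
  then have "g summable_on UNIV \<times> UNIV"
    by (rule summable_on_SigmaI[OF rows])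
      (use \<open>A \<ge> 0\<close> \<open>B \<ge> 0\<close> \<open>C \<ge> 0\<close> in \<open>auto simp: g_def\<close>)
  then have "g summable_on UNIV"
    by simp
  moreover have "norm (h p) \<le> g p" for p
    by (cases p) (simp only: g_def prod.case bound)
  ultimately have "(\<lambda>p. norm (h p)) summable_on UNIV"
    by (rule Infinite_Sum.abs_summable_on_comparison_test')
  then show ?thesis
    by (rule abs_summable_summable)
qed

lemma sums_infsum_rows:
  fixes g :: "nat \<times> nat \<Rightarrow> complex"
  assumes "g summable_on UNIV"
  shows "(\<lambda>a. \<Sum>\<^sub>\<infinity>b. g (a, b)) sums infsum g UNIV"
proof -
  have rows: "(\<lambda>b. g (a, b)) summable_on UNIV" for a
  proof -
    have "g summable_on Pair a ` UNIV"
      using assms summable_on_subset_banach by blast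
    then show ?thesis
      by (subst (asm) summable_on_reindex) (auto simp: o_def inj_on_def)
  qed
  have "((\<lambda>a. \<Sum>\<^sub>\<infinity>b. g (a, b)) has_sum infsum g UNIV) UNIV"
    by (rule has_sum_Sigma'[where f = g and B = "\<lambda>_. UNIV"]) (use assms rows in auto)
  then show ?thesis
    by (rule has_sum_imp_sums)
qed

lemma sums_infsum_antidiagonals:
  fixes g :: "nat \<times> nat \<Rightarrow> complex"
  assumes "g summable_on UNIV"
  shows "(\<lambda>N. \<Sum>a\<le>N. g (a, N - a)) sums infsum g UNIV"
proof -
  have bij: "bij_betw (\<lambda>(N, a). (a, N - a)) (SIGMA N:UNIV. {..N::nat}) UNIV"
    by (rule bij_betw_byWitness[where f' = "\<lambda>(a, b). (a + b, a)"]) (auto simp: image_iff)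
  have "(g has_sum infsum g UNIV) UNIV"
    using assms by simp
  then have "((\<lambda>p. g ((\<lambda>(N, a). (a, N - a)) p)) has_sum infsum g UNIV) (SIGMA N:UNIV. {..N})"
    by (subst has_sum_reindex_bij_betw[OF bij])
  then have "((\<lambda>N. \<Sum>a\<le>N. g (a, N - a)) has_sum infsum g UNIV) UNIV"
    by (rule has_sum_Sigma') simp_all
  then show ?thesis
    by (rule has_sum_imp_sums)
qed

lemma sums_reindex_of_real:
  fixes f :: "nat \<Rightarrow> complex"
  assumes "f sums S" and "strict_mono g" and "\<And>n. n \<notin> range g \<Longrightarrow> f n = 0"
    and "\<And>k. f (g k) = complex_of_real (t k)"
  shows "S = complex_of_real (suminf t)"
proof -
  have sums_S: "(\<lambda>k. complex_of_real (t k)) sums S"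
    using sums_mono_reindex[of g f S] assms by simp
  then have "summable t"
    by (simp add: sums_iff)
  then have "(\<lambda>k. complex_of_real (t k)) sums complex_of_real (suminf t)"
    by (simp add: sums_of_real_iff summable_sums)
  with sums_S show ?thesis
    by (rule sums_unique2)
qed

lemma alternating_series_bounds:
  fixes a :: "nat \<Rightarrow> real"
  assumes nonneg: "\<And>k. 0 \<le> a k" and decreasing: "\<And>k. a (Suc k) \<le> a k"
    and dominated: "\<And>k. a k \<le> C * (x ^ k / fact k)"
  shows "(\<Sum>i<2 * n. (-1) ^ i * a i) \<le> (\<Sum>k. (-1) ^ k * a k)"
    and "(\<Sum>k. (-1) ^ k * a k) \<le> (\<Sum>i<2 * n + 1. (-1) ^ i * a i)"
proof -
  have lim: "a \<longlonglongrightarrow> 0"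
  proof (rule Lim_null_comparison)
    show "\<forall>\<^sub>F k in sequentially. norm (a k) \<le> C * (x ^ k / fact k)"
      using nonneg dominated by simp
    show "(\<lambda>k. C * (x ^ k / fact k)) \<longlonglongrightarrow> 0"
      by (intro tendsto_mult_right_zero summable_LIMSEQ_zero summable_power_over_fact)
  qed
  note Leibniz = summable_Leibniz'[of a, OF lim nonneg decreasing]
  show "(\<Sum>i<2 * n. (-1) ^ i * a i) \<le> (\<Sum>k. (-1) ^ k * a k)"
    by (rule Leibniz(2))
  show "(\<Sum>k. (-1) ^ k * a k) \<le> (\<Sum>i<2 * n + 1. (-1) ^ i * a i)"
    by (rule Leibniz(4))
qed

lemma has_vector_derivative_imag_axis:
  assumes "(f has_field_derivative f') (at (\<i> * complex_of_real u))"
  shows "((\<lambda>t. f (\<i> * complex_of_real t)) has_vector_derivative \<i> * f') (at u)"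
proof -
  have "((\<lambda>z. f (\<i> * z)) has_field_derivative f' * \<i>) (at (complex_of_real u))"
    by (rule DERIV_chain2[OF assms DERIV_cmult_Id])
  then have "((\<lambda>t. f (\<i> * complex_of_real t)) has_vector_derivative f' * \<i>) (at u)"
    by (rule has_vector_derivative_real_field)
  then show ?thesis
    by (simp only: mult.commute[of f'])
qed

lemma has_real_derivative_cmod_power2:
  assumes "(f has_vector_derivative f') (at t)"
  shows "((\<lambda>t. (cmod (f t))\<^sup>2) has_real_derivative 2 * Re (cnj (f t) * f')) (at t)"
proof -
  have Re: "((\<lambda>t. Re (f t)) has_real_derivative Re f') (at t)"
    and Im: "((\<lambda>t. Im (f t)) has_real_derivative Im f') (at t)"
    using has_field_derivative_Re[OF assms] has_field_derivative_Im[OF assms] .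
  have "((\<lambda>t. (Re (f t))\<^sup>2 + (Im (f t))\<^sup>2) has_real_derivative
      2 * Re (f t) * Re f' + 2 * Im (f t) * Im f') (at t)"
    using DERIV_add[OF DERIV_mult[OF Re Re] DERIV_mult[OF Im Im]]
    by (simp add: power2_eq_square algebra_simps)
  then show ?thesis
    by (simp add: cmod_power2 algebra_simps)
qed

section \<open>Binomial identities\<close>

lemma real_binomial_le_pow2: "real (n choose k) \<le> 2 ^ n"
  using binomial_le_pow2[of n k] by (metis of_nat_le_iff of_nat_numeral of_nat_power)

lemma central_binomial_Suc: "(2 * (n + 1)) choose (n + 1) = 2 * ((2 * n + 1) choose n)"
  using binomial_Suc_Suc[of "2 * n + 1" n] central_binomial_odd[of "2 * n + 1"] by simp

lemma Suc_mult_central_binomial_Suc: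
  "(n + 1) * ((2 * (n + 1)) choose (n + 1)) = 2 * (2 * n + 1) * ((2 * n) choose n)"
proof -
  have "(n + 1) * ((2 * n + 1) choose (n + 1)) = (2 * n + 1) * ((2 * n) choose n)"
    using Suc_times_binomial[of n "2 * n"] by simp
  then show ?thesis
    using central_binomial_odd[of "2 * n + 1"] unfolding central_binomial_Suc by simp
qed

lemma coeff_X2_plus_one_power:
  "coeff ((monom 1 2 + 1) ^ m) m = (if even m then m choose (m div 2) else (0::nat))"
proof -
  have "(monom (1::nat) 2 + 1) ^ m = (\<Sum>l\<le>m. monom (of_nat (m choose l)) (2 * l))"
    by (subst binomial_ring) (simp add: monom_power of_nat_monom mult_monom mult.commute)
  then have "coeff ((monom 1 2 + 1) ^ m) m = (\<Sum>l\<le>m. if l = m div 2 \<and> even m then m choose l else 0)"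
    by (simp add: coeff_sum) (intro sum.cong; auto)
  also have "\<dots> = (if even m then m choose (m div 2) else 0)"
    by (cases "even m") auto
  finally show ?thesis .
qed

lemma central_binomial_trinomial:
  "(2 * N) choose N =
    (\<Sum>i\<le>N. (N choose i) * 2 ^ i * (if even (N - i) then (N - i) choose ((N - i) div 2) else 0))"
proof -
  have "[:1, 1:] ^ 2 = monom (2::nat) 1 + (monom 1 2 + 1)"
    by (simp add: power2_eq_square monom_Suc monom_0 one_pCons numeral_2_eq_2)
  then have square: "[:1, 1:] ^ (2 * N) = (monom (2::nat) 1 + (monom 1 2 + 1)) ^ N"
    by (simp add: power_mult)
  have "(2 * N) choose N = coeff ([:1, 1::nat:] ^ (2 * N)) N"
    by (subst coeff_linear_poly_power) auto
  also have "\<dots> = coeff ((monom 2 1 + (monom 1 2 + 1)) ^ N) N"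
    unfolding square ..
  also have "\<dots> = coeff (\<Sum>i\<le>N. monom (of_nat (N choose i) * 2 ^ i) i * (monom 1 2 + 1) ^ (N - i)) N"
    by (subst binomial_ring) (simp add: monom_power of_nat_monom mult_monom mult.assoc)
  also have "\<dots> = (\<Sum>i\<le>N. (N choose i) * 2 ^ i * coeff ((monom 1 2 + 1) ^ (N - i)) (N - i))"
    unfolding coeff_sum by (intro sum.cong) (auto simp: coeff_monom_mult)
  finally show ?thesis
    by (simp only: coeff_X2_plus_one_power)
qed

definition M_coeff :: "nat \<Rightarrow> nat \<Rightarrow> real" where
  "M_coeff a b = fact (a + b) / (fact (a + 1) * fact (b + 1) * fact a * fact b)"

definition P_coeff :: "nat \<Rightarrow> real" where
  "P_coeff n = real ((2 * n) choose n) / fact n"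

definition K_coeff :: "nat \<Rightarrow> real" where
  "K_coeff n = (if n = 0 then 0 else real ((2 * n - 2) choose (n - 1)) / fact n)"

definition Q_coeff :: "nat \<Rightarrow> real" where
  "Q_coeff n = (if even n then 1 / (fact (n div 2))\<^sup>2 else 0)"

lemma M_coeff_nonneg: "M_coeff a b \<ge> 0"
  by (simp add: M_coeff_def)

lemma M_coeff_commute: "M_coeff a b = M_coeff b a"
  by (simp add: M_coeff_def add.commute mult_ac)

lemma M_coeff_binomial:
  "M_coeff a b = real ((a + b + 2) choose (a + 1)) * real ((a + b) choose a) / fact (a + b + 2)"
proof -
  have "real ((a + b + 2) choose (a + 1)) = fact (a + b + 2) / (fact (a + 1) * fact (b + 1))"
    using binomial_fact[of "a + 1" "a + b + 2"] by (simp del: fact_Suc binomial_Suc_Suc)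
  moreover have "real ((a + b) choose a) = fact (a + b) / (fact a * fact b)"
    using binomial_fact[of a "a + b"] by simp
  ultimately show ?thesis
    unfolding M_coeff_def by (simp del: fact_Suc binomial_Suc_Suc)
qed

lemma Suc_mult_M_coeff_binomial:
  "(real a + 1) * M_coeff a b = real ((a + b + 1) choose a) * real ((a + b) choose a) / fact (a + b + 1)"
proof -
  have "real ((a + b + 1) choose a) = fact (a + b + 1) / (fact a * fact (b + 1))"
    using binomial_fact[of a "a + b + 1"] by (simp del: fact_Suc binomial_Suc_Suc)
  moreover have "real ((a + b) choose a) = fact (a + b) / (fact a * fact b)"
    using binomial_fact[of a "a + b"] by simp
  moreover have "fact (a + 1) = (real a + 1) * fact a"
    by simp
  ultimately show ?thesis
    unfolding M_coeff_def by (simp del: fact_Suc binomial_Suc_Suc)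
qed

lemma Suc_mult_M_coeff_le: "(real a + 1) * M_coeff a b \<le> 2 ^ (a + b) / (fact a * fact b)"
proof -
  have "real ((a + b + 1) choose a) = fact (a + b + 1) / (fact a * fact (b + 1))"
    using binomial_fact[of a "a + b + 1"] by (simp del: fact_Suc binomial_Suc_Suc)
  then have "(real a + 1) * M_coeff a b = real ((a + b) choose a) / (fact a * fact (b + 1))"
    unfolding Suc_mult_M_coeff_binomial by (simp add: field_simps del: fact_Suc binomial_Suc_Suc)
  also have "\<dots> \<le> 2 ^ (a + b) / (fact a * fact (b + 1))"
    by (intro divide_right_mono real_binomial_le_pow2) simp
  also have "\<dots> \<le> 2 ^ (a + b) / (fact a * fact b)"
    by (intro divide_left_mono mult_left_mono fact_mono) auto
  finally show ?thesis .
qed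

lemma M_coeff_le: "M_coeff a b \<le> 2 ^ (a + b) / (fact a * fact b)"
  using mult_right_mono[of 1 "real a + 1" "M_coeff a b"] M_coeff_nonneg Suc_mult_M_coeff_le[of a b]
  by simp

lemma sum_Suc_mult_M_coeff_antidiagonal:
  "(\<Sum>a\<le>N. (real a + 1) * M_coeff a (N - a)) = P_coeff (N + 1) / 2"
proof -
  have "(\<Sum>a\<le>N. (real a + 1) * M_coeff a (N - a))
      = real (\<Sum>a\<le>N. ((N + 1) choose a) * (N choose (N - a))) / fact (N + 1)"
    unfolding of_nat_sum sum_divide_distrib
  proof (intro sum.cong refl)
    fix a assume "a \<in> {..N}"
    then show "(real a + 1) * M_coeff a (N - a) = real (((N + 1) choose a) * (N choose (N - a))) / fact (N + 1)"
      using Suc_mult_M_coeff_binomial[of a "N - a"] binomial_symmetric[of a N] by simp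
  qed
  also have "(\<Sum>a\<le>N. ((N + 1) choose a) * (N choose (N - a))) = (2 * N + 1) choose N"
    using vandermonde[of "N + 1" N N] by (simp add: mult_2)
  finally show ?thesis
    unfolding P_coeff_def central_binomial_Suc by simp
qed

lemma sum_M_coeff_antidiagonal: "(\<Sum>a\<le>N. M_coeff a (N - a)) = K_coeff (N + 2)"
proof -
  have "(\<Sum>a\<le>N. M_coeff a (N - a))
      = real (\<Sum>a\<le>N. ((N + 2) choose Suc a) * (N choose (Suc N - Suc a))) / fact (N + 2)"
    unfolding of_nat_sum sum_divide_distrib
  proof (intro sum.cong refl)
    fix a assume "a \<in> {..N}"
    then show "M_coeff a (N - a) = real (((N + 2) choose Suc a) * (N choose (Suc N - Suc a))) / fact (N + 2)"
      using M_coeff_binomial[of a "N - a"] binomial_symmetric[of a N] by simp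
  qed
  also have "(\<Sum>a\<le>N. ((N + 2) choose Suc a) * (N choose (Suc N - Suc a))) = (2 * N + 2) choose (N + 1)"
  proof -
    have "(\<Sum>k\<le>Suc N. ((N + 2) choose k) * (N choose (Suc N - k))) = (2 * N + 2) choose (N + 1)"
      using vandermonde[of "N + 2" N "N + 1"] by (simp add: mult_2)
    then show ?thesis
      by (subst (asm) sum.atMost_Suc_shift) (simp add: binomial_eq_0 del: binomial_Suc_Suc)
  qed
  finally show ?thesis
    by (simp add: K_coeff_def)
qed

lemma diffs_K_coeff: "diffs K_coeff = P_coeff"
  by (simp add: fun_eq_iff diffs_def K_coeff_def P_coeff_def)

lemma K_coeff_Suc: "K_coeff (n + 1) = 2 * P_coeff n - (real n + 1) * P_coeff (n + 1) / 2"
proof -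
  define c c' x where "c = (2 * n) choose n" and "c' = (2 * (n + 1)) choose (n + 1)"
    and "x = real n + 1"
  have "x > 0"
    by (simp add: x_def)
  have "real ((n + 1) * c') = real (2 * (2 * n + 1) * c)"
    unfolding c_def c'_def Suc_mult_central_binomial_Suc ..
  then have c': "x * real c' = 2 * (2 * x - 1) * real c"
    by (simp add: x_def algebra_simps)
  have coeffs: "K_coeff (n + 1) = real c / (x * fact n)" "P_coeff n = real c / fact n"
    "P_coeff (n + 1) = real c' / (x * fact n)"
    by (simp_all add: K_coeff_def P_coeff_def c_def c'_def x_def del: binomial_Suc_Suc)
  show ?thesis
    unfolding coeffs x_def[symmetric] using \<open>x > 0\<close> c' by (simp add: field_simps)
qed

lemma Q_coeff_le: "Q_coeff n \<le> 2 ^ n / fact n"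
proof (cases "even n")
  case True
  then obtain k where n: "n = 2 * k"
    by blast
  have "fact (2 * k) / (fact k)\<^sup>2 = real ((2 * k) choose k)"
    using binomial_fact[of k "2 * k", where 'a = real] by (simp add: power2_eq_square)
  also have "\<dots> \<le> 2 ^ (2 * k)"
    by (rule real_binomial_le_pow2)
  finally show ?thesis
    by (simp add: n Q_coeff_def field_simps)
qed (simp add: Q_coeff_def)

lemma P_coeff_convolution: "P_coeff N = (\<Sum>i\<le>N. 2 ^ i / fact i * Q_coeff (N - i))"
proof -
  have "real ((N choose i) * 2 ^ i * (if even (N - i) then (N - i) choose ((N - i) div 2) else 0)) / fact N
      = 2 ^ i / fact i * Q_coeff (N - i)" if "i \<le> N" for i
  proof (cases "even (N - i)")
    case True
    then obtain k where k: "N - i = 2 * k"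
      by blast
    have "real (N choose i) = fact N / (fact i * fact (2 * k))"
      using binomial_fact[of i N, where 'a = real] that k by simp
    moreover have "real ((2 * k) choose k) = fact (2 * k) / (fact k)\<^sup>2"
      using binomial_fact[of k "2 * k", where 'a = real] by (simp add: power2_eq_square)
    ultimately show ?thesis
      by (simp add: k Q_coeff_def field_simps)
  qed (simp add: Q_coeff_def)
  then show ?thesis
    unfolding P_coeff_def central_binomial_trinomial of_nat_sum sum_divide_distrib
    by (intro sum.cong refl) auto
qed

section \<open>The power series P, K and Q\<close>

definition pseries :: "(nat \<Rightarrow> real) \<Rightarrow> complex \<Rightarrow> complex" where
  "pseries c z = (\<Sum>n. complex_of_real (c n) * z ^ n)"

lemma summable_pseries_exp_bounded:
  assumes "\<And>n. \<bar>c n\<bar> \<le> B ^ n / fact n"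
  shows "summable (\<lambda>n. norm (complex_of_real (c n) * z ^ n))"
proof (rule summable_comparison_test[OF _ summable_power_over_fact[of "B * norm z"]])
  have "\<bar>c n\<bar> * norm z ^ n \<le> B ^ n / fact n * norm z ^ n" for n
    by (intro mult_right_mono assms) simp
  then show "\<exists>N. \<forall>n\<ge>N. norm (norm (complex_of_real (c n) * z ^ n)) \<le> (B * norm z) ^ n / fact n"
    by (simp add: norm_mult norm_power power_mult_distrib)
qed

lemma has_field_derivative_pseries:
  assumes "\<And>z. summable (\<lambda>n. complex_of_real (c n) * z ^ n)"
  shows "(pseries c has_field_derivative pseries (diffs c) z) (at z)"
  using termdiffs_strong_converges_everywhere[of "\<lambda>n. complex_of_real (c n)", OF assms]
  by (simp add: pseries_def[abs_def] diffs_def)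

lemma summable_pseries_diffs:
  assumes "\<And>z. summable (\<lambda>n. complex_of_real (c n) * z ^ n)"
  shows "summable (\<lambda>n. complex_of_real (diffs c n) * z ^ n)"
  using termdiff_converges_all[of "\<lambda>n. complex_of_real (c n)", OF assms]
  by (simp add: diffs_def)

lemma summable_Q_series: "summable (\<lambda>n. complex_of_real (Q_coeff n) * z ^ n)"
proof (rule summable_norm_cancel, rule summable_pseries_exp_bounded)
  show "\<bar>Q_coeff n\<bar> \<le> 2 ^ n / fact n" for n
    using Q_coeff_le[of n] by (simp add: Q_coeff_def)
qed

lemma sums_P_series: "(\<lambda>n. complex_of_real (P_coeff n) * z ^ n) sums (exp (2 * z) * pseries Q_coeff z)"
proof -
  define a b where "a n = complex_of_real (2 ^ n / fact n) * z ^ n" and "b n = complex_of_real (Q_coeff n) * z ^ n"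
    for n
  have "summable (\<lambda>n. norm (a n))"
    unfolding a_def by (rule summable_pseries_exp_bounded[where B = 2]) simp
  moreover have "summable (\<lambda>n. norm (b n))"
    unfolding b_def
    by (rule summable_pseries_exp_bounded[where B = 2]) (use Q_coeff_le in \<open>simp add: Q_coeff_def\<close>)
  moreover have "(\<Sum>i\<le>k. a i * b (k - i)) = complex_of_real (P_coeff k) * z ^ k" for k
  proof -
    have "a i * b (k - i) = complex_of_real (2 ^ i / fact i * Q_coeff (k - i)) * z ^ k" if "i \<le> k" for i
      using that by (simp add: a_def b_def power_add[symmetric] mult_ac)
    then show ?thesis
      by (simp add: P_coeff_convolution[of k] sum_distrib_right)
  qed
  moreover have "exp (2 * z) = (\<Sum>n. a n)"
    using exp_converges[of "2 * z"]
    by (simp add: a_def sums_iff scaleR_conv_of_real power_mult_distrib divide_inverse mult_ac)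
  ultimately show ?thesis
    unfolding pseries_def b_def[symmetric]
    using Cauchy_product[of a b] summable_Cauchy_product[of a b] by (simp add: sums_iff)
qed

lemma summable_P_series: "summable (\<lambda>n. complex_of_real (P_coeff n) * z ^ n)"
  using sums_P_series by (rule sums_summable)

lemma pseries_P_eq_exp_Q: "pseries P_coeff z = exp (2 * z) * pseries Q_coeff z"
  using sums_unique[OF sums_P_series] by (simp add: pseries_def)

lemma pseries_diffs_P_eq:
  "pseries (diffs P_coeff) z = exp (2 * z) * (2 * pseries Q_coeff z + pseries (diffs Q_coeff) z)"
proof -
  have "(pseries Q_coeff has_field_derivative pseries (diffs Q_coeff) z) (at z)"
    by (rule has_field_derivative_pseries[OF summable_Q_series])
  then have "((\<lambda>z. exp (2 * z) * pseries Q_coeff z) has_field_derivative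
      exp (2 * z) * 2 * pseries Q_coeff z + exp (2 * z) * pseries (diffs Q_coeff) z) (at z)"
    by (auto intro!: derivative_eq_intros)
  then have "(pseries P_coeff has_field_derivative
      exp (2 * z) * 2 * pseries Q_coeff z + exp (2 * z) * pseries (diffs Q_coeff) z) (at z)"
    by (simp add: pseries_P_eq_exp_Q[abs_def])
  with has_field_derivative_pseries[OF summable_P_series] show ?thesis
    by (auto dest: DERIV_unique simp: algebra_simps)
qed

lemma sums_K_series:
  "(\<lambda>n. complex_of_real (K_coeff n) * z ^ n)
    sums (z * (2 * pseries P_coeff z - pseries (diffs P_coeff) z / 2))"
proof -
  have "(\<lambda>n. z * (2 * (complex_of_real (P_coeff n) * z ^ n) - complex_of_real (diffs P_coeff n) * z ^ n / 2))
      sums (z * (2 * pseries P_coeff z - pseries (diffs P_coeff) z / 2))"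
    unfolding pseries_def
    by (intro sums_mult sums_diff sums_divide summable_sums summable_P_series
        summable_pseries_diffs[OF summable_P_series])
  moreover have "z * (2 * (complex_of_real (P_coeff n) * z ^ n) - complex_of_real (diffs P_coeff n) * z ^ n / 2)
      = complex_of_real (K_coeff (Suc n)) * z ^ Suc n" for n
  proof -
    have K: "complex_of_real (K_coeff (Suc n))
        = 2 * complex_of_real (P_coeff n) - complex_of_real (diffs P_coeff n) / 2"
      using K_coeff_Suc[of n] by (simp add: diffs_def)
    show ?thesis
      unfolding K power_Suc by (simp add: field_simps)
  qed
  ultimately have "(\<lambda>n. complex_of_real (K_coeff (Suc n)) * z ^ Suc n)
      sums (z * (2 * pseries P_coeff z - pseries (diffs P_coeff) z / 2))"
    by simp
  then show ?thesis
    by (subst (asm) sums_Suc_iff) (simp add: K_coeff_def)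
qed

lemma summable_K_series: "summable (\<lambda>n. complex_of_real (K_coeff n) * z ^ n)"
  using sums_K_series by (rule sums_summable)

lemma pseries_K_eq: "pseries K_coeff z = z * exp (2 * z) * (pseries Q_coeff z - pseries (diffs Q_coeff) z / 2)"
proof -
  have "pseries K_coeff z = z * (2 * pseries P_coeff z - pseries (diffs P_coeff) z / 2)"
    unfolding pseries_def[of K_coeff] using sums_K_series by (rule sums_unique[symmetric])
  then show ?thesis
    by (simp add: pseries_diffs_P_eq pseries_P_eq_exp_Q field_simps)
qed

definition BesselJ1 :: "real \<Rightarrow> real" where
  "BesselJ1 x = (\<Sum>k. (-1) ^ k * (x / 2) ^ (2 * k + 1) / (fact k * fact (k + 1)))"

lemma imag_power_even: "(\<i> * complex_of_real u) ^ (2 * k) = complex_of_real ((-1) ^ k * u ^ (2 * k))"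
proof -
  have "(\<i> * complex_of_real u) ^ 2 = complex_of_real (- (u ^ 2))"
    by (simp add: power_mult_distrib)
  moreover have "(-1) ^ k * u ^ (2 * k) = (- (u ^ 2)) ^ k"
    by (simp add: power_mult power_minus[of "u ^ 2"])
  ultimately show ?thesis
    by (simp add: power_mult)
qed

lemma imag_power_odd: "(\<i> * complex_of_real u) ^ (2 * k + 1) = \<i> * complex_of_real ((-1) ^ k * u ^ (2 * k + 1))"
  by (subst power_add) (simp only: imag_power_even power_one_right of_real_mult, simp add: mult_ac)

lemma pseries_Q_imag_axis: "pseries Q_coeff (\<i> * complex_of_real u) = complex_of_real (BesselJ0 (2 * u))"
  unfolding BesselJ0_def pseries_def
proof (rule sums_reindex_of_real)
  show "(\<lambda>n. complex_of_real (Q_coeff n) * (\<i> * complex_of_real u) ^ n) sums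
      (\<Sum>n. complex_of_real (Q_coeff n) * (\<i> * complex_of_real u) ^ n)"
    by (rule summable_sums[OF summable_Q_series])
  show "strict_mono (\<lambda>k::nat. 2 * k)"
    by (rule strict_monoI) simp
  show "complex_of_real (Q_coeff n) * (\<i> * complex_of_real u) ^ n = 0" if "n \<notin> range (\<lambda>k. 2 * k)" for n
    using that by (auto simp: Q_coeff_def)
  show "complex_of_real (Q_coeff (2 * k)) * (\<i> * complex_of_real u) ^ (2 * k)
      = complex_of_real ((-1) ^ k * (2 * u / 2) ^ (2 * k) / (fact k)\<^sup>2)" for k
    by (simp add: Q_coeff_def imag_power_even)
qed

lemma diffs_Q_coeff_odd: "diffs Q_coeff (2 * k + 1) = 2 / (fact k * fact (k + 1))"
proof -
  define x where "x = real k + 1"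
  have "x > 0" and fact_Suc_k: "fact (k + 1) = x * fact k"
    by (simp_all add: x_def)
  have "diffs Q_coeff (2 * k + 1) = 2 * x / (fact (k + 1))\<^sup>2"
    by (simp add: diffs_def Q_coeff_def x_def del: fact_Suc)
  also have "\<dots> = 2 / (fact k * fact (k + 1))"
    unfolding fact_Suc_k using \<open>x > 0\<close> by (simp add: field_simps power2_eq_square)
  finally show ?thesis .
qed

lemma pseries_diffs_Q_imag_axis:
  "pseries (diffs Q_coeff) (\<i> * complex_of_real u) = 2 * \<i> * complex_of_real (BesselJ1 (2 * u))"
proof -
  let ?f = "\<lambda>n. complex_of_real (diffs Q_coeff n) * (\<i> * complex_of_real u) ^ n / (2 * \<i>)"
  have "pseries (diffs Q_coeff) (\<i> * complex_of_real u) / (2 * \<i>) = complex_of_real (BesselJ1 (2 * u))"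
    unfolding BesselJ1_def
  proof (rule sums_reindex_of_real)
    show "?f sums (pseries (diffs Q_coeff) (\<i> * complex_of_real u) / (2 * \<i>))"
      unfolding pseries_def by (intro sums_divide summable_sums summable_pseries_diffs summable_Q_series)
    show "strict_mono (\<lambda>k::nat. 2 * k + 1)"
      by (rule strict_monoI) simp
    show "?f n = 0" if "n \<notin> range (\<lambda>k. 2 * k + 1)" for n
    proof -
      have "even n"
        using that by (metis oddE rangeI)
      then show ?thesis
        by (simp add: diffs_def Q_coeff_def)
    qed
    show "?f (2 * k + 1) = complex_of_real ((-1) ^ k * (2 * u / 2) ^ (2 * k + 1) / (fact k * fact (k + 1)))" for k
      unfolding diffs_Q_coeff_odd imag_power_odd by simp
  qed
  then show ?thesis
    by (simp add: divide_eq_eq mult_ac)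
qed

lemma pseries_P_imag_axis: "pseries P_coeff (\<i> * u) = exp (2 * \<i> * u) * BesselJ0 (2 * u)"
  by (simp add: pseries_P_eq_exp_Q pseries_Q_imag_axis mult.assoc)

section \<open>M as a double power series\<close>

definition M_family :: "complex \<Rightarrow> complex \<Rightarrow> nat \<times> nat \<Rightarrow> complex" where
  "M_family z w = (\<lambda>(a, b). complex_of_real (M_coeff a b) * z ^ (a + 1) * w ^ (b + 1))"

definition M_family_deriv :: "complex \<Rightarrow> complex \<Rightarrow> nat \<times> nat \<Rightarrow> complex" where
  "M_family_deriv z w = (\<lambda>(a, b). complex_of_real ((real a + 1) * M_coeff a b) * z ^ a * w ^ (b + 1))"

lemma summable_M_family: "M_family z w summable_on UNIV"
proof (rule summable_on_exp_dominated[where C = "norm z * norm w" and A = "2 * norm z" and B = "2 * norm w"])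
  fix a b
  have "norm (M_family z w (a, b)) = M_coeff a b * (norm z ^ (a + 1) * norm w ^ (b + 1))"
    by (simp add: M_family_def norm_mult norm_power M_coeff_nonneg)
  also have "\<dots> \<le> 2 ^ (a + b) / (fact a * fact b) * (norm z ^ (a + 1) * norm w ^ (b + 1))"
    by (intro mult_right_mono M_coeff_le) auto
  finally show "norm (M_family z w (a, b))
      \<le> norm z * norm w * ((2 * norm z) ^ a / fact a) * ((2 * norm w) ^ b / fact b)"
    by (simp add: power_add power_mult_distrib mult_ac)
qed auto

lemma summable_M_family_deriv: "M_family_deriv z w summable_on UNIV"
proof (rule summable_on_exp_dominated[where C = "norm w" and A = "2 * norm z" and B = "2 * norm w"])
  fix a b
  have "norm (M_family_deriv z w (a, b)) = (real a + 1) * M_coeff a b * (norm z ^ a * norm w ^ (b + 1))"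
    by (simp add: M_family_deriv_def norm_mult norm_power M_coeff_nonneg abs_mult del: of_real_mult)
  also have "\<dots> \<le> 2 ^ (a + b) / (fact a * fact b) * (norm z ^ a * norm w ^ (b + 1))"
    by (intro mult_right_mono Suc_mult_M_coeff_le) auto
  finally show "norm (M_family_deriv z w (a, b))
      \<le> norm w * ((2 * norm z) ^ a / fact a) * ((2 * norm w) ^ b / fact b)"
    by (simp add: power_add power_mult_distrib mult_ac)
qed auto

lemma M_eq_M_family: "M t u = t + u - 2 * \<i> * infsum (M_family (\<i> * t) (\<i> * u)) UNIV"
proof -
  have "bij_betw (\<lambda>(a, b). (a + 1, b + 1)) UNIV ({1::nat..} \<times> {1::nat..})"
    by (rule bij_betw_byWitness[where f' = "\<lambda>(a, b). (a - 1, b - 1)"]) (auto simp: image_iff)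
  moreover have "M_term t u (a + 1, b + 1) = M_family (\<i> * t) (\<i> * u) (a, b)" for a b
    by (simp add: M_term_def M_family_def M_coeff_def field_simps)
  ultimately have "infsum (M_term t u) ({1..} \<times> {1..}) = infsum (M_family (\<i> * t) (\<i> * u)) UNIV"
    by (subst infsum_reindex_bij_betw[symmetric]) (auto intro: infsum_cong)
  then show ?thesis
    by (simp add: M_def)
qed

lemma M_commute: "M u t = M t u"
proof -
  have "infsum (M_family z w) UNIV = infsum (M_family w z) UNIV" for z w
  proof -
    have "infsum (M_family z w) UNIV = infsum (\<lambda>p. M_family w z (prod.swap p)) UNIV"
      by (intro infsum_cong) (auto simp: M_family_def M_coeff_commute mult_ac)
    also have "\<dots> = infsum (M_family w z) UNIV"
      by (rule infsum_reindex_bij_betw) (rule bij_betw_byWitness[where f' = prod.swap]; auto)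
    finally show ?thesis .
  qed
  then show ?thesis
    by (simp add: M_eq_M_family add.commute)
qed

lemma has_field_derivative_M_family:
  "((\<lambda>z. infsum (M_family z w) UNIV) has_field_derivative infsum (M_family_deriv z w) UNIV) (at z)"
proof -
  define c where "c n = (if n = 0 then 0 else \<Sum>\<^sub>\<infinity>b. complex_of_real (M_coeff (n - 1) b) * w ^ (b + 1))"
    for n
  have "(\<lambda>n. c n * z ^ n) sums infsum (M_family z w) UNIV" for z
  proof -
    have "(\<lambda>a. \<Sum>\<^sub>\<infinity>b. M_family z w (a, b)) = (\<lambda>a. c (Suc a) * z ^ Suc a)"
      unfolding c_def M_family_def
      using infsum_cmult_right'[of "z ^ Suc a" "\<lambda>b. complex_of_real (M_coeff a b) * w ^ (b + 1)" UNIV for a]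
      by (simp add: mult_ac)
    then have "(\<lambda>a. c (Suc a) * z ^ Suc a) sums infsum (M_family z w) UNIV"
      using sums_infsum_rows[OF summable_M_family, of z w] by simp
    then show ?thesis
      by (subst (asm) sums_Suc_iff) (simp add: c_def)
  qed
  moreover have "(\<lambda>n. diffs c n * z ^ n) sums infsum (M_family_deriv z w) UNIV"
  proof -
    have "(\<lambda>a. \<Sum>\<^sub>\<infinity>b. M_family_deriv z w (a, b)) = (\<lambda>a. diffs c a * z ^ a)"
      unfolding c_def M_family_deriv_def diffs_def
      using infsum_cmult_right'[of "of_nat (Suc a) * z ^ a"
          "\<lambda>b. complex_of_real (M_coeff a b) * w ^ (b + 1)" UNIV for a]
      by (simp add: mult_ac add.commute)
    then show ?thesis
      using sums_infsum_rows[OF summable_M_family_deriv, of z w] by simp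
  qed
  ultimately show ?thesis
    using termdiffs_strong_converges_everywhere[of c z] by (simp add: sums_iff)
qed

lemma M_family_diag: "infsum (M_family x x) UNIV = pseries K_coeff x - x"
proof -
  have "(\<Sum>a\<le>N. M_family x x (a, N - a)) = complex_of_real (K_coeff (Suc (Suc N))) * x ^ Suc (Suc N)" for N
  proof -
    have "(\<Sum>a\<le>N. M_family x x (a, N - a)) = (\<Sum>a\<le>N. complex_of_real (M_coeff a (N - a)) * x ^ (N + 2))"
      by (intro sum.cong refl) (auto simp: M_family_def mult.assoc simp flip: power_add)
    also have "\<dots> = complex_of_real (\<Sum>a\<le>N. M_coeff a (N - a)) * x ^ (N + 2)"
      by (simp add: sum_distrib_right)
    finally show ?thesis
      unfolding sum_M_coeff_antidiagonal by simp
  qed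
  then have "(\<lambda>N. complex_of_real (K_coeff (Suc (Suc N))) * x ^ Suc (Suc N)) sums infsum (M_family x x) UNIV"
    using sums_infsum_antidiagonals[OF summable_M_family, of x x] by simp
  then have "(\<lambda>n. complex_of_real (K_coeff n) * x ^ n) sums (infsum (M_family x x) UNIV + x)"
    by (subst (asm) sums_Suc_iff, subst (asm) sums_Suc_iff) (simp add: K_coeff_def)
  then show ?thesis
    by (simp add: pseries_def sums_iff)
qed

lemma M_family_deriv_diag: "2 * infsum (M_family_deriv x x) UNIV = pseries P_coeff x - 1"
proof -
  have "2 * (\<Sum>a\<le>N. M_family_deriv x x (a, N - a)) = complex_of_real (P_coeff (Suc N)) * x ^ Suc N" for N
  proof -
    have "(\<Sum>a\<le>N. M_family_deriv x x (a, N - a))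
        = (\<Sum>a\<le>N. complex_of_real ((real a + 1) * M_coeff a (N - a)) * x ^ (N + 1))"
      by (intro sum.cong refl) (auto simp: M_family_deriv_def mult.assoc simp flip: power_add)
    also have "\<dots> = complex_of_real (\<Sum>a\<le>N. (real a + 1) * M_coeff a (N - a)) * x ^ (N + 1)"
      by (simp add: sum_distrib_right del: of_real_mult)
    finally show ?thesis
      unfolding sum_Suc_mult_M_coeff_antidiagonal by (simp add: mult.commute)
  qed
  then have "(\<lambda>N. complex_of_real (P_coeff (Suc N)) * x ^ Suc N) sums (2 * infsum (M_family_deriv x x) UNIV)"
    using sums_mult[OF sums_infsum_antidiagonals[OF summable_M_family_deriv, of x x], of 2] by simp
  then have "(\<lambda>n. complex_of_real (P_coeff n) * x ^ n) sums (2 * infsum (M_family_deriv x x) UNIV + 1)"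
    by (subst (asm) sums_Suc_iff) (simp add: P_coeff_def)
  then show ?thesis
    by (simp add: pseries_def sums_iff)
qed

lemma has_vector_derivative_M_first: "((\<lambda>t. M t u) has_vector_derivative pseries P_coeff (\<i> * u)) (at u)"
proof -
  define D where "D = infsum (M_family_deriv (\<i> * u) (\<i> * u)) UNIV"
  have "((\<lambda>t. infsum (M_family (\<i> * t) (\<i> * u)) UNIV) has_vector_derivative \<i> * D) (at u)"
    unfolding D_def by (rule has_vector_derivative_imag_axis[OF has_field_derivative_M_family])
  then have "((\<lambda>t. complex_of_real t + complex_of_real u - 2 * \<i> * infsum (M_family (\<i> * t) (\<i> * u)) UNIV)
      has_vector_derivative of_real 1 + 0 - 2 * \<i> * (\<i> * D)) (at u)"
    by (intro has_vector_derivative_diff has_vector_derivative_add has_vector_derivative_mult_right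
        has_vector_derivative_of_real DERIV_ident has_vector_derivative_const)
  moreover have "of_real 1 + 0 - 2 * \<i> * (\<i> * D) = pseries P_coeff (\<i> * u)"
    using M_family_deriv_diag[of "\<i> * u"] by (simp add: D_def mult.assoc)
  ultimately show ?thesis
    by (simp add: M_eq_M_family)
qed

lemma M_diag_eq_pseries_K: "M u u = - 2 * \<i> * pseries K_coeff (\<i> * u)"
  by (simp add: M_eq_M_family M_family_diag algebra_simps)

lemma has_vector_derivative_M_diag: "((\<lambda>t. M t t) has_vector_derivative 2 * pseries P_coeff (\<i> * u)) (at u)"
proof -
  have "((\<lambda>t. pseries K_coeff (\<i> * t)) has_vector_derivative \<i> * pseries P_coeff (\<i> * u)) (at u)"
    using has_vector_derivative_imag_axis[OF has_field_derivative_pseries[OF summable_K_series]]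
    by (simp add: diffs_K_coeff)
  then have "((\<lambda>t. M t t) has_vector_derivative - 2 * \<i> * (\<i> * pseries P_coeff (\<i> * u))) (at u)"
    unfolding M_diag_eq_pseries_K by (rule has_vector_derivative_mult_right)
  moreover have "- 2 * \<i> * (\<i> * w) = 2 * w" for w :: complex
    by (simp add: mult.assoc)
  ultimately show ?thesis
    by (simp only:)
qed

lemma stationary_diag_iff: "stationary_diag u \<longleftrightarrow> u > 0 \<and> BesselJ0 (2 * u) = 0"
proof -
  have "((\<lambda>t. M t u) has_vector_derivative 0) (at u) \<longleftrightarrow> pseries P_coeff (\<i> * u) = 0"
    using has_vector_derivative_M_first[of u] vector_derivative_unique_at by metis
  moreover have "(\<lambda>t. M u t) = (\<lambda>t. M t u)"
    by (simp add: M_commute)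
  ultimately show ?thesis
    by (simp add: stationary_diag_def pseries_P_imag_axis)
qed

lemma M_diag_closed_form:
  "M u u = 2 * complex_of_real u * exp (2 * \<i> * u) * (BesselJ0 (2 * u) - \<i> * BesselJ1 (2 * u))"
proof -
  have "M u u = - 2 * \<i> * (\<i> * u * exp (2 * \<i> * u) * (BesselJ0 (2 * u) - 2 * \<i> * BesselJ1 (2 * u) / 2))"
    unfolding M_diag_eq_pseries_K pseries_K_eq pseries_Q_imag_axis pseries_diffs_Q_imag_axis by (simp add: mult.assoc)
  then show ?thesis
    by (simp add: algebra_simps)
qed

lemma has_real_derivative_cmod_M_diag_power2:
  "((\<lambda>t. (cmod (M t t))\<^sup>2) has_real_derivative 8 * u * (BesselJ0 (2 * u))\<^sup>2) (at u)"
proof -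
  define E where "E = exp (2 * \<i> * u)"
  have "((\<lambda>t. M t t) has_vector_derivative 2 * E * BesselJ0 (2 * u)) (at u)"
    using has_vector_derivative_M_diag[of u] by (simp add: E_def pseries_P_imag_axis mult.assoc)
  then have "((\<lambda>t. (cmod (M t t))\<^sup>2) has_real_derivative
      2 * Re (cnj (M u u) * (2 * E * BesselJ0 (2 * u)))) (at u)"
    by (rule has_real_derivative_cmod_power2)
  moreover have "2 * Re (cnj (M u u) * (2 * E * BesselJ0 (2 * u))) = 8 * u * (BesselJ0 (2 * u))\<^sup>2"
  proof -
    have M: "M u u = 2 * complex_of_real u * E * (BesselJ0 (2 * u) - \<i> * BesselJ1 (2 * u))"
      unfolding E_def by (rule M_diag_closed_form)
    have "cnj (M u u) * (2 * E * BesselJ0 (2 * u))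
        = (cnj E * E) * (4 * complex_of_real u * BesselJ0 (2 * u) * (BesselJ0 (2 * u) + \<i> * BesselJ1 (2 * u)))"
      unfolding M by (simp add: algebra_simps)
    also have "cnj E * E = 1"
      by (simp add: E_def exp_cnj flip: exp_add)
    finally have eq: "cnj (M u u) * (2 * E * BesselJ0 (2 * u))
        = complex_of_real (4 * u * BesselJ0 (2 * u)) * (BesselJ0 (2 * u) + \<i> * BesselJ1 (2 * u))"
      by simp
    show ?thesis
      unfolding eq by (simp add: power2_eq_square)
  qed
  ultimately show ?thesis
    by (simp only:)
qed

lemma norm_M_diag_mono:
  assumes "0 \<le> a" "a \<le> b"
  shows "cmod (M a a / (2 * \<i>)) \<le> cmod (M b b / (2 * \<i>))"
proof -
  have "(cmod (M a a))\<^sup>2 \<le> (cmod (M b b))\<^sup>2"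
  proof (rule DERIV_nonneg_imp_nondecreasing[OF assms(2)])
    fix x assume "a \<le> x" "x \<le> b"
    then show "\<exists>y. ((\<lambda>t. (cmod (M t t))\<^sup>2) has_real_derivative y) (at x) \<and> 0 \<le> y"
      using has_real_derivative_cmod_M_diag_power2[of x] assms
      by (intro exI[of _ "8 * x * (BesselJ0 (2 * x))\<^sup>2"]) auto
  qed
  then have "cmod (M a a) \<le> cmod (M b b)"
    by (rule power2_le_imp_le) simp
  then show ?thesis
    by (simp add: norm_mult)
qed

section \<open>The first zero of J0\<close>

lemma has_real_derivative_BesselJ0_double:
  "((\<lambda>u. BesselJ0 (2 * u)) has_real_derivative - 2 * BesselJ1 (2 * u)) (at u)"
proof -
  have "((\<lambda>t. pseries Q_coeff (\<i> * t)) has_vector_derivative \<i> * pseries (diffs Q_coeff) (\<i> * u)) (at u)"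
    by (rule has_vector_derivative_imag_axis[OF has_field_derivative_pseries[OF summable_Q_series]])
  then have "((\<lambda>t. Re (pseries Q_coeff (\<i> * t))) has_real_derivative
      Re (\<i> * pseries (diffs Q_coeff) (\<i> * u))) (at u)"
    by (rule has_field_derivative_Re)
  then show ?thesis
    by (simp add: pseries_Q_imag_axis pseries_diffs_Q_imag_axis)
qed

lemma BesselJ1_double_pos:
  assumes "0 < u" "u\<^sup>2 < 2"
  shows "BesselJ1 (2 * u) > 0"
proof -
  define a where "a k = u ^ (2 * k + 1) / (fact k * fact (k + 1))" for k
  have ratio: "a (Suc k) = a k * (u\<^sup>2 / ((real k + 1) * (real k + 2)))" for k
    by (simp add: a_def field_simps power2_eq_square)
  have ratio_le_1: "u\<^sup>2 / ((real k + 1) * (real k + 2)) \<le> 1" for k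
  proof -
    have "(2::real) \<le> (real k + 1) * (real k + 2)"
      using mult_mono[of 1 "real k + 1" 2 "real k + 2"] by simp
    then show ?thesis
      using assms by simp
  qed
  have nonneg: "0 \<le> a k" for k
    using assms by (simp add: a_def)
  have "a (Suc k) \<le> a k" for k
    unfolding ratio using ratio_le_1 nonneg by (rule mult_left_le)
  moreover have "a k \<le> u * ((u\<^sup>2) ^ k / fact k)" for k
  proof -
    have "u ^ (2 * k + 1) = u * (u\<^sup>2) ^ k"
      by (simp add: power_add power_mult)
    then have "a k = u * (u\<^sup>2) ^ k / (fact k * fact (k + 1))"
      by (simp add: a_def)
    also have "\<dots> \<le> u * (u\<^sup>2) ^ k / fact k"
      using assms by (intro divide_left_mono) (simp_all del: fact_Suc)
    finally show ?thesis
      by simp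
  qed
  ultimately have "(\<Sum>i<2 * 1. (-1) ^ i * a i) \<le> (\<Sum>k. (-1) ^ k * a k)"
    using nonneg by (intro alternating_series_bounds(1))
  moreover have "(\<Sum>i<2 * 1. (-1) ^ i * a i) = u * (1 - u\<^sup>2 / 2)"
    by (simp add: a_def eval_nat_numeral algebra_simps)
  moreover have "BesselJ1 (2 * u) = (\<Sum>k. (-1) ^ k * a k)"
    by (simp add: BesselJ1_def a_def)
  moreover have "u * (1 - u\<^sup>2 / 2) > 0"
    using assms by simp
  ultimately show ?thesis
    by linarith
qed

lemma BesselJ0_double_decreasing:
  assumes "0 < a" "a < b" "b\<^sup>2 < 2"
  shows "BesselJ0 (2 * b) < BesselJ0 (2 * a)"
proof (rule DERIV_neg_imp_decreasing[OF \<open>a < b\<close>])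
  fix x assume "a \<le> x" "x \<le> b"
  then have "0 < x"
    using assms by simp
  moreover have "x\<^sup>2 \<le> b\<^sup>2"
    using \<open>x \<le> b\<close> \<open>0 < x\<close> by (intro power_mono) auto
  then have "x\<^sup>2 < 2"
    using assms by linarith
  ultimately show "\<exists>y. ((\<lambda>u. BesselJ0 (2 * u)) has_real_derivative y) (at x) \<and> y < 0"
    using has_real_derivative_BesselJ0_double[of x] BesselJ1_double_pos[of x]
    by (intro exI[of _ "- 2 * BesselJ1 (2 * x)"]) simp
qed

lemma BesselJ0_double_eq_tail:
  "BesselJ0 (2 * u) = 1 - (\<Sum>k. (-1) ^ k * (u ^ (2 * k + 2) / (fact (k + 1))\<^sup>2))"
proof -
  define f where "f k = (-1) ^ k * u ^ (2 * k) / (fact k)\<^sup>2" for k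
  have "norm (f k) \<le> (u\<^sup>2) ^ k / fact k" for k
    by (simp add: f_def abs_mult power_abs power_mult divide_left_mono power2_eq_square)
  then have "summable f"
    by (intro summable_comparison_test[OF _ summable_power_over_fact]) auto
  then have "(\<lambda>k. f (Suc k)) sums (suminf f - 1)"
    by (subst sums_Suc_iff) (simp add: f_def summable_sums)
  moreover have "(\<lambda>k. f (Suc k)) = (\<lambda>k. - ((-1) ^ k * (u ^ (2 * k + 2) / (fact (k + 1))\<^sup>2)))"
    by (simp add: fun_eq_iff f_def)
  ultimately have "(\<lambda>k. (-1) ^ k * (u ^ (2 * k + 2) / (fact (k + 1))\<^sup>2)) sums (1 - suminf f)"
    using sums_minus by fastforce
  moreover have "BesselJ0 (2 * u) = suminf f"
    by (simp add: BesselJ0_def f_def[abs_def])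
  ultimately show ?thesis
    by (simp add: sums_iff)
qed

lemma BesselJ0_double_bounds:
  assumes "0 \<le> u" "u \<le> 2"
  defines "c \<equiv> \<lambda>k. u ^ (2 * k + 2) / (fact (k + 1))\<^sup>2"
  shows "1 - (\<Sum>i<2 * n + 1. (-1) ^ i * c i) \<le> BesselJ0 (2 * u)"
    and "BesselJ0 (2 * u) \<le> 1 - (\<Sum>i<2 * n. (-1) ^ i * c i)"
proof -
  \<comment> \<open>The series 1 - u^2 + u^4/4 - ... for J0(2u) does not have decreasing terms when u > 1,
    so the Leibniz bounds are applied to its tail after the constant term.\<close>
  have ratio: "c (Suc k) = c k * (u\<^sup>2 / (real k + 2)\<^sup>2)" for k
    by (simp add: c_def field_simps power2_eq_square)
  have nonneg: "0 \<le> c k" for k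
    using assms by (simp add: c_def)
  have "u\<^sup>2 / (real k + 2)\<^sup>2 \<le> 1" for k
    using assms power_mono[of u "real k + 2" 2] by simp
  then have decreasing: "c (Suc k) \<le> c k" for k
    unfolding ratio using nonneg by (rule mult_left_le)
  have dominated: "c k \<le> u\<^sup>2 * ((u\<^sup>2) ^ k / fact k)" for k
  proof -
    have "u ^ (2 * k + 2) = u\<^sup>2 * (u\<^sup>2) ^ k"
      by (simp add: power_add power_mult power2_eq_square)
    then have "c k = u\<^sup>2 * (u\<^sup>2) ^ k / (fact (k + 1))\<^sup>2"
      by (simp add: c_def)
    also have "\<dots> \<le> u\<^sup>2 * (u\<^sup>2) ^ k / fact k"
    proof (rule divide_left_mono)
      have "(fact k :: real) \<le> fact (k + 1)"
        by (rule fact_mono) simp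
      also have "\<dots> \<le> (fact (k + 1))\<^sup>2"
        by (simp add: power2_eq_square mult_le_cancel_left1 del: fact_Suc)
      finally show "fact k \<le> (fact (k + 1) :: real)\<^sup>2" .
    qed simp_all
    finally show ?thesis
      by simp
  qed
  note bounds = alternating_series_bounds[OF nonneg decreasing dominated]
  have tail: "BesselJ0 (2 * u) = 1 - (\<Sum>k. (-1) ^ k * c k)"
    unfolding c_def by (rule BesselJ0_double_eq_tail)
  show "1 - (\<Sum>i<2 * n + 1. (-1) ^ i * c i) \<le> BesselJ0 (2 * u)"
    using tail bounds(2)[of n] by linarith
  show "BesselJ0 (2 * u) \<le> 1 - (\<Sum>i<2 * n. (-1) ^ i * c i)"
    using tail bounds(1)[of n] by linarith
qed

lemma BesselJ0_2402_pos: "BesselJ0 (2 * (1201 / 1000)) > 0"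
proof -
  have "0 < 1 - (\<Sum>i<2 * 3 + 1. (-1) ^ i * ((1201 / 1000) ^ (2 * i + 2) / (fact (i + 1))\<^sup>2 :: real))"
    by (simp add: eval_nat_numeral)
  also have "\<dots> \<le> BesselJ0 (2 * (1201 / 1000))"
    by (rule BesselJ0_double_bounds(1)) simp_all
  finally show ?thesis .
qed

lemma BesselJ0_2406_neg: "BesselJ0 (2 * (1203 / 1000)) < 0"
proof -
  have "BesselJ0 (2 * (1203 / 1000))
      \<le> 1 - (\<Sum>i<2 * 3. (-1) ^ i * ((1203 / 1000) ^ (2 * i + 2) / (fact (i + 1))\<^sup>2 :: real))"
    by (rule BesselJ0_double_bounds(2)) simp_all
  also have "\<dots> < 0"
    by (simp add: eval_nat_numeral)
  finally show ?thesis .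
qed

lemma BesselJ0_double_first_zero:
  obtains us where "1201 / 1000 < us" "us < 1203 / 1000" "BesselJ0 (2 * us) = 0"
    and "\<And>v. 0 < v \<Longrightarrow> BesselJ0 (2 * v) = 0 \<Longrightarrow> us \<le> v"
proof -
  have "continuous_on {1201 / 1000..1203 / 1000} (\<lambda>u. BesselJ0 (2 * u))"
    using has_real_derivative_BesselJ0_double
    by (intro continuous_at_imp_continuous_on) (auto dest: DERIV_isCont)
  then have "\<exists>u \<ge> 1201 / 1000. u \<le> 1203 / 1000 \<and> BesselJ0 (2 * u) = 0"
    using BesselJ0_2402_pos BesselJ0_2406_neg by (intro IVT2') auto
  then obtain us where us: "1201 / 1000 \<le> us" "us \<le> 1203 / 1000" "BesselJ0 (2 * us) = 0"
    by blast
  moreover have "us \<noteq> 1201 / 1000" "us \<noteq> 1203 / 1000"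
    using us(3) BesselJ0_2402_pos BesselJ0_2406_neg by (metis less_irrefl)+
  ultimately have bounds: "1201 / 1000 < us" "us < 1203 / 1000"
    by auto
  have "us \<le> v" if "0 < v" "BesselJ0 (2 * v) = 0" for v
  proof (rule ccontr)
    assume "\<not> us \<le> v"
    moreover have "us\<^sup>2 < (1203 / 1000)\<^sup>2"
      using bounds by (intro power_strict_mono) auto
    then have "us\<^sup>2 < 2"
      by (simp add: power2_eq_square)
    ultimately show False
      using BesselJ0_double_decreasing[of v us] that us(3) by simp
  qed
  with bounds us(3) show ?thesis
    using that by blast
qed

theorem proposition2:
  shows "\<exists>us. stationary_diag us
      \<and> (\<forall>u. stationary_diag u \<longrightarrow> us \<le> u)
      \<and> BesselJ0 (2 * us) = 0
      \<and> (\<forall>v>0. BesselJ0 (2 * v) = 0 \<longrightarrow> us \<le> v)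
      \<and> 1.201 < us \<and> us < 1.203
      \<and> (\<forall>u. stationary_diag u \<longrightarrow>
            cmod (M us us / (2 * \<i>)) \<le> cmod (M u u / (2 * \<i>)))"
proof -
  obtain us where bounds: "1201 / 1000 < us" "us < 1203 / 1000" and zero: "BesselJ0 (2 * us) = 0"
    and first_zero: "\<And>v. 0 < v \<Longrightarrow> BesselJ0 (2 * v) = 0 \<Longrightarrow> us \<le> v"
    using BesselJ0_double_first_zero by blast
  have "stationary_diag us"
    using bounds zero by (simp add: stationary_diag_iff)
  moreover have least: "us \<le> u" if "stationary_diag u" for u
    using that first_zero by (simp add: stationary_diag_iff)
  moreover have "cmod (M us us / (2 * \<i>)) \<le> cmod (M u u / (2 * \<i>))" if "stationary_diag u" for u
    using bounds least[OF that] by (intro norm_M_diag_mono) simp_all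
  ultimately show ?thesis
    using zero bounds first_zero by auto
qed

end
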